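(* Let $k$ be a field of characteristic $p>0$, let $1\le c<p$, and let $a\ge b\ge1$ be integers, $d=a+b+c$. Then the Young module $Y^{(a,b,1^c)}$ is a direct summand of the signed permutation module $M^{(a,b|c)}$.
   Context: For a sequence $\gamma=(\gamma_1,\dots,\gamma_t)$ of nonnegative integers summing to $r$, $\Sigma_\gamma=\Sigma_{\gamma_1}\times\dots\times\Sigma_{\gamma_t}\le\Sigma_r$ (the first factor permuting the first $\gamma_1$ letters, etc.). For $\lambda=(\lambda_1,\dots,\lambda_m)$, $\mu=(\mu_1,\dots,\mu_n)$ with $|\lambda|+|\mu|=d$, the signed permutation module is $M^{(\lambda|\mu)}=\operatorname{ind}_{\Sigma_\lambda\times\Sigma_\mu}^{\Sigma_d}(k\boxtimes\operatorname{sgn})$, with $k$ trivial for $\Sigma_\lambda$ and $\operatorname{sgn}$ the sign representation of $\Sigma_\mu$; thus $M^{(a,b|c)}=\operatorname{ind}_{\Sigma_a\times\Sigma_b\times\Sigma_c}^{\Sigma_d}(k\boxtimes k\boxtimes\operatorname{sgn})$. For a partition $\lambda$ of $d$, the Young module $Y^\lambda$ is the unique indecomposable direct summand of the permutation module $M^\lambda=\operatorname{ind}_{\Sigma_\lambda}^{\Sigma_d}k$ containing the Specht module $S^\lambda$. *)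

theory Defs
  imports Main "HOL-Combinatorics.Permutations"
begin

text \<open>The letters are {0..<d}; the symmetric
group Sigma_d is the set of g with g permutes {0..<d}, with product composition.
All modules considered are subsets of the function space (nat => nat) => 'k, with
Sigma_d acting by (x . f) g = f (g o x).\<close>

type_synonym 'k fn = "(nat \<Rightarrow> nat) \<Rightarrow> 'k"

definition letters :: "nat \<Rightarrow> nat set" where
  "letters d = {0..<d}"

definition act :: "(nat \<Rightarrow> nat) \<Rightarrow> 'k fn \<Rightarrow> 'k fn" where
  "act x f = (\<lambda>g. f (g \<circ> x))"

definition zerofn :: "'k::zero fn" where
  "zerofn = (\<lambda>g. 0)"

definition addfn :: "'k::plus fn \<Rightarrow> 'k fn \<Rightarrow> 'k fn" where
  "addfn f h = (\<lambda>g. f g + h g)"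

definition smultfn :: "'k::times \<Rightarrow> 'k fn \<Rightarrow> 'k fn" where
  "smultfn c f = (\<lambda>g. c * f g)"

text \<open>Block index of a letter j for a composition gamma (list of block sizes):
the i with gamma_1+...+gamma_i <= j < gamma_1+...+gamma_(i+1).\<close>
definition blk :: "nat list \<Rightarrow> nat \<Rightarrow> nat" where
  "blk \<gamma> j = card {i. i < length \<gamma> \<and> sum_list (take (Suc i) \<gamma>) \<le> j}"

text \<open>Column index of position j in the row blk gamma j of the Young diagram.\<close>
definition colx :: "nat list \<Rightarrow> nat \<Rightarrow> nat" where
  "colx \<gamma> j = j - sum_list (take (blk \<gamma> j) \<gamma>)"

definition young_subgroup :: "nat \<Rightarrow> nat list \<Rightarrow> (nat \<Rightarrow> nat) set" where
  "young_subgroup d \<gamma> =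
     {h. h permutes letters d \<and> (\<forall>j\<in>letters d. blk \<gamma> (h j) = blk \<gamma> j)}"

text \<open>Induced module ind_H^{Sigma_d} chi, realised as
{f supported on Sigma_d | f (h o g) = chi h * f g for h in H}.\<close>
definition ind_module :: "nat \<Rightarrow> (nat \<Rightarrow> nat) set \<Rightarrow> ((nat \<Rightarrow> nat) \<Rightarrow> 'k::field) \<Rightarrow> 'k fn set" where
  "ind_module d H \<chi> =
     {f. (\<forall>g. \<not> g permutes letters d \<longrightarrow> f g = 0) \<and>
         (\<forall>h\<in>H. \<forall>g. g permutes letters d \<longrightarrow> f (h \<circ> g) = \<chi> h * f g)}"

text \<open>Signed permutation module M^(lambda|mu): induced from
Sigma_lambda x Sigma_mu = Sigma_(lambda @ mu) of trivial x sign.  The character takes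
the sign of the part of h acting on the last |mu| letters.\<close>
definition sign_part :: "nat \<Rightarrow> (nat \<Rightarrow> nat) \<Rightarrow> 'k::field" where
  "sign_part n h = of_int (sign (\<lambda>j. if n \<le> j then h j else j))"

definition signed_perm_module :: "nat list \<Rightarrow> nat list \<Rightarrow> 'k::field fn set" where
  "signed_perm_module lam mu =
     ind_module (sum_list lam + sum_list mu) (young_subgroup (sum_list lam + sum_list mu) (lam @ mu))
       (sign_part (sum_list lam))"

definition perm_module :: "nat list \<Rightarrow> 'k::field fn set" where
  "perm_module lam = ind_module (sum_list lam) (young_subgroup (sum_list lam) lam) (\<lambda>h. 1)"

definition is_submodule :: "nat \<Rightarrow> 'k::field fn set \<Rightarrow> 'k fn set \<Rightarrow> bool" where
  "is_submodule d U M \<longleftrightarrow> U \<subseteq> M \<and> zerofn \<in> U \<and>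
     (\<forall>f\<in>U. \<forall>h\<in>U. addfn f h \<in> U) \<and> (\<forall>c. \<forall>f\<in>U. smultfn c f \<in> U) \<and>
     (\<forall>x. x permutes letters d \<longrightarrow> (\<forall>f\<in>U. act x f \<in> U))"

definition is_direct_sum :: "nat \<Rightarrow> 'k::field fn set \<Rightarrow> 'k fn set \<Rightarrow> 'k fn set \<Rightarrow> bool" where
  "is_direct_sum d M U W \<longleftrightarrow> is_submodule d U M \<and> is_submodule d W M \<and>
     U \<inter> W = {zerofn} \<and> M = {addfn u w |u w. u \<in> U \<and> w \<in> W}"

definition is_summand :: "nat \<Rightarrow> 'k::field fn set \<Rightarrow> 'k fn set \<Rightarrow> bool" where
  "is_summand d M U \<longleftrightarrow> (\<exists>W. is_direct_sum d M U W)"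

definition indecomposable :: "nat \<Rightarrow> 'k::field fn set \<Rightarrow> bool" where
  "indecomposable d U \<longleftrightarrow> U \<noteq> {zerofn} \<and>
     (\<forall>U1 U2. is_direct_sum d U U1 U2 \<longrightarrow> U1 = {zerofn} \<or> U2 = {zerofn})"

definition module_iso :: "nat \<Rightarrow> 'k::field fn set \<Rightarrow> 'k fn set \<Rightarrow> bool" where
  "module_iso d U V \<longleftrightarrow> (\<exists>\<phi>. bij_betw \<phi> U V \<and>
     (\<forall>f\<in>U. \<forall>h\<in>U. \<phi> (addfn f h) = addfn (\<phi> f) (\<phi> h)) \<and>
     (\<forall>c. \<forall>f\<in>U. \<phi> (smultfn c f) = smultfn c (\<phi> f)) \<and>
     (\<forall>x. x permutes letters d \<longrightarrow> (\<forall>f\<in>U. \<phi> (act x f) = act x (\<phi> f))))"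

definition kspan :: "'k::field fn set \<Rightarrow> 'k fn set" where
  "kspan S = {f. \<exists>F c. finite F \<and> F \<subseteq> S \<and> f = (\<lambda>g. \<Sum>v\<in>F. c v * v g)}"

text \<open>The basis vector of M^lambda attached to the coset Sigma_lambda g
corresponds to the tabloid in which letter j lies in row blk lambda (g j).
The tableau t_g puts letter j into the box (blk lambda (g j), colx lambda (g j)).\<close>
definition tabloid_vec :: "nat list \<Rightarrow> (nat \<Rightarrow> nat) \<Rightarrow> 'k::field fn" where
  "tabloid_vec lam g = (\<lambda>g'. if g' permutes letters (sum_list lam) \<and>
       (\<forall>j\<in>letters (sum_list lam). blk lam (g' j) = blk lam (g j)) then 1 else 0)"

definition column_stabilizer :: "nat list \<Rightarrow> (nat \<Rightarrow> nat) \<Rightarrow> (nat \<Rightarrow> nat) set" where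
  "column_stabilizer lam g = {\<sigma>. \<sigma> permutes letters (sum_list lam) \<and>
       (\<forall>j\<in>letters (sum_list lam). colx lam (g (\<sigma> j)) = colx lam (g j))}"

definition polytabloid :: "nat list \<Rightarrow> (nat \<Rightarrow> nat) \<Rightarrow> 'k::field fn" where
  "polytabloid lam g = (\<lambda>g'. \<Sum>\<sigma>\<in>column_stabilizer lam g.
       of_int (sign \<sigma>) * tabloid_vec lam (g \<circ> inv \<sigma>) g')"

definition specht_module :: "nat list \<Rightarrow> 'k::field fn set" where
  "specht_module lam = kspan {polytabloid lam g | g. g permutes letters (sum_list lam)}"

text \<open>Y is (a representative of) the Young module Y^lambda: an indecomposable direct
summand of M^lambda containing the Specht module S^lambda.\<close>
definition is_young_module :: "nat list \<Rightarrow> 'k::field fn set \<Rightarrow> bool" where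
  "is_young_module lam Y \<longleftrightarrow> is_summand (sum_list lam) (perm_module lam) Y \<and>
     indecomposable (sum_list lam) Y \<and> specht_module lam \<subseteq> Y"

end

theory Submission
  imports Defs "HOL.Vector_Spaces" "HOL-Library.Function_Algebras"
begin

(*
  Let M = M^(a,b,1^c) = Y \<oplus> W.  Functions on \<Sigma>_d that transform by the sign character
  under \<Sigma>_(a,b,c) are in particular invariant under \<Sigma>_(a,b,1^c), so M^(a,b|c) is a
  submodule of M, and the antisymmetrizer over the last c letters,
  P f = (1/c!) \<Sum>_\<tau> sgn(\<tau>) f(\<tau> \<circ> _), maps M into M^(a,b|c); here c < p makes c! invertible.
  The last c letters lie in the first column of the tableau filled row by row, so P fixes
  its polytabloid e, a nonzero element of the Specht module and hence of Y.  With \<pi> the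
  projection onto Y, the endomorphism \<pi> \<circ> P of Y fixes e, so it is not nilpotent, and by
  Fitting's lemma it is an automorphism of the indecomposable module Y.  Therefore P maps Y
  isomorphically onto P(Y), and M^(a,b|c) = P(Y) \<oplus> (M^(a,b|c) \<inter> W).
*)

lemma addfn_eq_plus: "addfn f h = f + h"
  by (simp add: addfn_def fun_eq_iff)

lemma zerofn_eq_zero: "zerofn = 0"
  by (simp add: zerofn_def fun_eq_iff)

interpretation fn_space: vector_space "smultfn :: 'k::field \<Rightarrow> 'k fn \<Rightarrow> 'k fn"
  by unfold_locales (auto simp: smultfn_def fun_eq_iff algebra_simps)

lemma act_diff: "act x (f - h) = act x f - act x h"
  by (simp add: act_def fun_eq_iff)

lemma act_zero: "act x 0 = 0"
  by (simp add: act_def fun_eq_iff)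

lemma sum_fn_apply: "(\<Sum>i\<in>A. F i) g = (\<Sum>i\<in>A. F i g)"
  for F :: "_ \<Rightarrow> 'k::comm_monoid_add fn"
  by (induction A rule: infinite_finite_induct) auto

lemma permutes_compose_left_iff:
  assumes "x permutes S"
  shows "x \<circ> g permutes S \<longleftrightarrow> g permutes S"
proof
  assume "x \<circ> g permutes S"
  then have "inv x \<circ> (x \<circ> g) permutes S" using permutes_compose permutes_inv[OF assms] by blast
  then show "g permutes S" by (simp add: o_assoc permutes_inv_o[OF assms])
qed (rule permutes_compose[OF _ assms])

lemma permutes_compose_right_iff:
  assumes "x permutes S"
  shows "g \<circ> x permutes S \<longleftrightarrow> g permutes S"
proof
  assume "g \<circ> x permutes S"
  then have "g \<circ> x \<circ> inv x permutes S" using permutes_compose permutes_inv[OF assms] by blast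
  then show "g permutes S" by (simp add: comp_assoc permutes_inv_o[OF assms])
qed (rule permutes_compose[OF assms])

lemma permutes_restrict_invariant:
  assumes "h permutes S" "finite T" "h ` T \<subseteq> T"
  shows "(\<lambda>j. if j \<in> T then h j else j) permutes T"
proof (rule bij_imp_permutes)
  have "inj_on h T" using permutes_inj[OF assms(1)] by (simp add: inj_on_def)
  then have "bij_betw h T T" using endo_inj_surj[OF assms(2,3)] by (simp add: bij_betw_def)
  then show "bij_betw (\<lambda>j. if j \<in> T then h j else j) T T"
    by (rule bij_betw_cong[THEN iffD1, rotated]) simp
qed simp

lemma sum_sign_compose_right:
  fixes F :: "(nat \<Rightarrow> nat) \<Rightarrow> 'a::comm_ring_1"
  assumes \<theta>: "\<theta> permutes S" and S: "finite S"
  shows "(\<Sum>\<tau> | \<tau> permutes S. of_int (sign \<tau>) * F (\<tau> \<circ> \<theta>)) =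
    of_int (sign \<theta>) * (\<Sum>\<tau> | \<tau> permutes S. of_int (sign \<tau>) * F \<tau>)"
proof -
  have "(\<Sum>\<tau> | \<tau> permutes S. of_int (sign \<tau>) * F \<tau>) =
      (\<Sum>\<tau> | \<tau> permutes S. of_int (sign (\<tau> \<circ> \<theta>)) * F (\<tau> \<circ> \<theta>))"
    by (rule sum_permutations_compose_right[OF \<theta>])
  also have "\<dots> = of_int (sign \<theta>) * (\<Sum>\<tau> | \<tau> permutes S. of_int (sign \<tau>) * F (\<tau> \<circ> \<theta>))"
    using permutes_imp_permutation[OF S] \<theta>
    by (simp add: sum_distrib_left sign_compose mult_ac)
  finally show ?thesis
    by (simp flip: mult.assoc of_int_mult)
qed

lemma is_submodule_iff:
  "is_submodule d U X \<longleftrightarrow> U \<subseteq> X \<and> fn_space.subspace U \<and>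
     (\<forall>x. x permutes letters d \<longrightarrow> (\<forall>f\<in>U. act x f \<in> U))"
  by (auto simp: is_submodule_def fn_space.subspace_def addfn_eq_plus zerofn_eq_zero)

lemma submoduleI:
  assumes "U \<subseteq> X" "fn_space.subspace U" "\<And>x f. x permutes letters d \<Longrightarrow> f \<in> U \<Longrightarrow> act x f \<in> U"
  shows "is_submodule d U X"
  using assms by (simp add: is_submodule_iff)

lemma submoduleD:
  assumes "is_submodule d U X"
  shows "U \<subseteq> X" "fn_space.subspace U" "x permutes letters d \<Longrightarrow> f \<in> U \<Longrightarrow> act x f \<in> U"
  using assms by (auto simp: is_submodule_iff)

lemma submodule_zero: "is_submodule d U X \<Longrightarrow> 0 \<in> U"
  using submoduleD(2) fn_space.subspace_0 by blast

lemma submodule_add: "is_submodule d U X \<Longrightarrow> f \<in> U \<Longrightarrow> h \<in> U \<Longrightarrow> f + h \<in> U"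
  using submoduleD(2) fn_space.subspace_add by blast

lemma submodule_diff: "is_submodule d U X \<Longrightarrow> f \<in> U \<Longrightarrow> h \<in> U \<Longrightarrow> f - h \<in> U"
  using submoduleD(2) fn_space.subspace_diff by blast

lemma submodule_smult: "is_submodule d U X \<Longrightarrow> f \<in> U \<Longrightarrow> smultfn c f \<in> U"
  using submoduleD(2) fn_space.subspace_scale by blast

lemma submodule_mono: "is_submodule d U X \<Longrightarrow> U \<subseteq> Z \<Longrightarrow> is_submodule d U Z"
  by (simp add: is_submodule_def)

lemma submodule_Int: "is_submodule d U X \<Longrightarrow> is_submodule d V Z \<Longrightarrow> is_submodule d (U \<inter> V) U"
  by (auto simp: is_submodule_iff fn_space.subspace_inter)

lemma ind_module_submodule: "is_submodule d (ind_module d H \<chi> :: 'k::field fn set) UNIV"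
proof (rule submoduleI)
  show "fn_space.subspace (ind_module d H \<chi>)"
    by (auto simp: fn_space.subspace_def ind_module_def smultfn_def algebra_simps)
  show "act x f \<in> ind_module d H \<chi>" if x: "x permutes letters d" and "f \<in> ind_module d H \<chi>" for x f
    using \<open>f \<in> ind_module d H \<chi>\<close> permutes_compose_right_iff[OF x] permutes_compose[OF x]
    by (auto simp: ind_module_def act_def comp_assoc)
qed simp

definition is_module_hom :: "nat \<Rightarrow> 'k::field fn set \<Rightarrow> ('k fn \<Rightarrow> 'k fn) \<Rightarrow> bool" where
  "is_module_hom d U \<phi> \<longleftrightarrow>
     (\<forall>f\<in>U. \<forall>h\<in>U. \<phi> (f + h) = \<phi> f + \<phi> h) \<and> (\<forall>c. \<forall>f\<in>U. \<phi> (smultfn c f) = smultfn c (\<phi> f)) \<and>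
     (\<forall>x. x permutes letters d \<longrightarrow> (\<forall>f\<in>U. \<phi> (act x f) = act x (\<phi> f)))"

lemma is_module_homI:
  assumes "\<And>f h. f \<in> U \<Longrightarrow> h \<in> U \<Longrightarrow> \<phi> (f + h) = \<phi> f + \<phi> h"
    "\<And>c f. f \<in> U \<Longrightarrow> \<phi> (smultfn c f) = smultfn c (\<phi> f)"
    "\<And>x f. x permutes letters d \<Longrightarrow> f \<in> U \<Longrightarrow> \<phi> (act x f) = act x (\<phi> f)"
  shows "is_module_hom d U \<phi>"
  using assms by (simp add: is_module_hom_def)

lemma is_module_homD:
  assumes "is_module_hom d U \<phi>" "f \<in> U"
  shows "h \<in> U \<Longrightarrow> \<phi> (f + h) = \<phi> f + \<phi> h" "\<phi> (smultfn c f) = smultfn c (\<phi> f)"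
    "x permutes letters d \<Longrightarrow> \<phi> (act x f) = act x (\<phi> f)"
  using assms by (auto simp: is_module_hom_def)

lemma is_module_hom_subset: "is_module_hom d U \<phi> \<Longrightarrow> V \<subseteq> U \<Longrightarrow> is_module_hom d V \<phi>"
  unfolding is_module_hom_def by blast

lemma is_module_hom_diff:
  assumes "is_submodule d U X" "is_module_hom d U \<phi>" "f \<in> U" "h \<in> U"
  shows "\<phi> (f - h) = \<phi> f - \<phi> h"
  using is_module_homD(1)[OF assms(2) submodule_diff[OF assms(1,3,4)] assms(4)] by simp

lemma is_module_hom_zero: "is_submodule d U X \<Longrightarrow> is_module_hom d U \<phi> \<Longrightarrow> \<phi> 0 = 0"
  using is_module_hom_diff[of d U X \<phi> 0 0] submodule_zero by fastforce

lemma is_module_hom_comp: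
  "is_module_hom d U \<phi> \<Longrightarrow> is_module_hom d V \<psi> \<Longrightarrow> \<phi> ` U \<subseteq> V \<Longrightarrow> is_module_hom d U (\<psi> \<circ> \<phi>)"
  unfolding is_module_hom_def image_subset_iff by auto

lemma funpow_image_subset: "\<phi> ` U \<subseteq> U \<Longrightarrow> (\<phi> ^^ n) ` U \<subseteq> U"
  by (induction n) (auto simp: image_subset_iff)

lemma is_module_hom_funpow:
  assumes "is_module_hom d U \<phi>" "\<phi> ` U \<subseteq> U"
  shows "is_module_hom d U (\<phi> ^^ n)"
proof (induction n)
  case 0
  show ?case by (simp add: is_module_hom_def)
next
  case (Suc n)
  show ?case
    using is_module_hom_comp[OF Suc assms(1) funpow_image_subset[OF assms(2)]]
    by (simp only: funpow.simps(2))
qed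

lemma submodule_image:
  assumes U: "is_submodule d U X" and \<phi>: "is_module_hom d U \<phi>" and "\<phi> ` U \<subseteq> Z"
  shows "is_submodule d (\<phi> ` U) Z"
proof (rule submoduleI)
  have "0 \<in> \<phi> ` U"
    using is_module_hom_zero[OF U \<phi>] submodule_zero[OF U] by force
  moreover have "\<phi> f + \<phi> h \<in> \<phi> ` U" if "f \<in> U" "h \<in> U" for f h
    using that submodule_add[OF U that] by (simp flip: is_module_homD(1)[OF \<phi>])
  moreover have "smultfn c (\<phi> f) \<in> \<phi> ` U" if "f \<in> U" for c f
    using that submodule_smult[OF U that] by (simp flip: is_module_homD(2)[OF \<phi>])
  ultimately show "fn_space.subspace (\<phi> ` U)"
    unfolding fn_space.subspace_def by blast
  show "act x f \<in> \<phi> ` U" if "x permutes letters d" "f \<in> \<phi> ` U" for x f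
    using that submoduleD(3)[OF U] by (force simp flip: is_module_homD(3)[OF \<phi>])
qed (use assms in auto)

lemma submodule_kernel:
  assumes U: "is_submodule d U X" and \<phi>: "is_module_hom d U \<phi>"
  shows "is_submodule d {u \<in> U. \<phi> u = 0} U"
proof (rule submoduleI)
  show "fn_space.subspace {u \<in> U. \<phi> u = 0}"
    unfolding fn_space.subspace_def
    using is_module_hom_zero[OF U \<phi>] submodule_zero[OF U] submodule_add[OF U] submodule_smult[OF U]
    by (auto simp: is_module_homD(1,2)[OF \<phi>])
  show "act x f \<in> {u \<in> U. \<phi> u = 0}" if "x permutes letters d" "f \<in> {u \<in> U. \<phi> u = 0}" for x f
    using that submoduleD(3)[OF U] by (auto simp: is_module_homD(3)[OF \<phi>] act_zero)
qed auto

lemma module_iso_image: "is_module_hom d U \<phi> \<Longrightarrow> inj_on \<phi> U \<Longrightarrow> module_iso d U (\<phi> ` U)"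
  unfolding module_iso_def is_module_hom_def addfn_eq_plus by (blast intro: inj_on_imp_bij_betw)

lemma is_direct_sumI:
  assumes "is_submodule d M X" "is_submodule d U M" "is_submodule d W M" "\<And>x. x \<in> U \<Longrightarrow> x \<in> W \<Longrightarrow> x = 0"
    and "\<And>m. m \<in> M \<Longrightarrow> \<exists>u\<in>U. m - u \<in> W"
  shows "is_direct_sum d M U W"
proof -
  have "M = {u + w |u w. u \<in> U \<and> w \<in> W}"
  proof
    show "M \<subseteq> {u + w |u w. u \<in> U \<and> w \<in> W}"
      using assms(5) by force
    show "{u + w |u w. u \<in> U \<and> w \<in> W} \<subseteq> M"
      using assms(1-3) by (auto dest: submoduleD(1) intro: submodule_add)
  qed
  then show ?thesis
    using assms(2-4) submodule_zero[OF assms(2)] submodule_zero[OF assms(3)]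
    by (auto simp: is_direct_sum_def addfn_eq_plus zerofn_eq_zero)
qed

definition supported :: "nat \<Rightarrow> 'k::zero fn set" where
  "supported d = {f. \<forall>g. \<not> g permutes letters d \<longrightarrow> f g = 0}"

lemma ind_module_subset_supported: "ind_module d H \<chi> \<subseteq> supported d"
  by (auto simp: ind_module_def supported_def)

lemma finite_permutations_letters: "finite {g. g permutes letters d}"
  by (simp add: finite_permutations letters_def)

lemma supported_subset_span:
  "supported d \<subseteq> fn_space.span ((\<lambda>g g'. if g' = g then 1 else 0) ` {g. g permutes letters d}
     :: 'k::field fn set)"
proof
  fix f :: "'k fn" assume f: "f \<in> supported d"
  have "f = (\<Sum>g | g permutes letters d. smultfn (f g) (\<lambda>g'. if g' = g then 1 else 0))"
  proof
    fix x
    have "(\<Sum>g | g permutes letters d. smultfn (f g) (\<lambda>g'. if g' = g then 1 else 0)) x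
        = (\<Sum>g | g permutes letters d. if g = x then f x else 0)"
      unfolding sum_fn_apply by (intro sum.cong) (auto simp: smultfn_def)
    also have "\<dots> = f x"
      using f finite_permutations_letters[of d] by (simp add: supported_def)
    finally show "f x = (\<Sum>g | g permutes letters d. smultfn (f g) (\<lambda>g'. if g' = g then 1 else 0)) x"
      ..
  qed
  also have "\<dots> \<in> fn_space.span ((\<lambda>g g'. if g' = g then 1 else 0) ` {g. g permutes letters d})"
    by (intro fn_space.span_sum fn_space.span_scale fn_space.span_base) auto
  finally show "f \<in> fn_space.span ((\<lambda>g g'. if g' = g then 1 else 0) ` {g. g permutes letters d})" .
qed

lemma independent_supported_finite:
  "fn_space.independent B \<Longrightarrow> B \<subseteq> (supported d :: 'k::field fn set) \<Longrightarrow> finite B"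
  using fn_space.independent_span_bound[OF finite_imageI[OF finite_permutations_letters]]
    supported_subset_span[where 'k='k] by blast

lemma dim_supported_le:
  assumes "A \<subseteq> (supported d :: 'k::field fn set)"
  shows "fn_space.dim A \<le> card {g. g permutes letters d}"
proof -
  have "fn_space.dim A \<le> card ((\<lambda>g g'. if g' = g then 1 else 0 :: 'k) ` {g. g permutes letters d})"
    using fn_space.dim_le_card[OF _ finite_imageI[OF finite_permutations_letters]]
      supported_subset_span assms by blast
  also have "\<dots> \<le> card {g. g permutes letters d}"
    by (rule card_image_le[OF finite_permutations_letters])
  finally show ?thesis .
qed

lemma dim_less_of_psubset_supported:
  assumes A: "fn_space.subspace A" and AB: "A \<subset> B" and B: "B \<subseteq> (supported d :: 'k::field fn set)"
  shows "fn_space.dim A < fn_space.dim B"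
proof -
  obtain x where x: "x \<in> B" "x \<notin> A" using AB by blast
  obtain BA where BA: "BA \<subseteq> A" "fn_space.independent BA" "A \<subseteq> fn_space.span BA"
    "card BA = fn_space.dim A"
    by (rule fn_space.basis_exists)
  obtain BB where BB: "BB \<subseteq> B" "fn_space.independent BB" "B \<subseteq> fn_space.span BB"
    "card BB = fn_space.dim B"
    by (rule fn_space.basis_exists)
  have "x \<notin> fn_space.span BA"
    using fn_space.span_minimal[OF BA(1) A] x by blast
  then have "fn_space.independent (insert x BA)"
    using fn_space.independent_insertI BA(2) by blast
  moreover have "insert x BA \<subseteq> fn_space.span BB" using x BA(1) AB BB(3) by blast
  moreover have "finite BB" using independent_supported_finite BB(1,2) B by blast
  ultimately have "card (insert x BA) \<le> card BB"
    using fn_space.independent_span_bound by blast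
  moreover have "finite BA" using independent_supported_finite BA(1,2) AB B by blast
  moreover have "x \<notin> BA" using x BA(1) by blast
  ultimately show ?thesis using BA(4) BB(4) by simp
qed

lemma decreasing_subspaces_stabilize:
  fixes X :: "nat \<Rightarrow> 'k::field fn set"
  assumes "\<And>n. fn_space.subspace (X n)" "\<And>n. X n \<subseteq> supported d" "\<And>n. X (Suc n) \<subseteq> X n"
  shows "\<exists>N. X (Suc N) = X N"
proof (rule ccontr)
  assume "\<nexists>N. X (Suc N) = X N"
  then have less: "fn_space.dim (X (Suc n)) < fn_space.dim (X n)" for n
    using dim_less_of_psubset_supported assms by (metis psubsetI)
  have "fn_space.dim (X n) + n \<le> fn_space.dim (X 0)" for n
  proof (induction n)
    case (Suc n)
    then show ?case using less[of n] by simp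
  qed simp
  from this[of "Suc (fn_space.dim (X 0))"] show False by simp
qed

lemma increasing_subspaces_stabilize:
  fixes X :: "nat \<Rightarrow> 'k::field fn set"
  assumes "\<And>n. fn_space.subspace (X n)" "\<And>n. X n \<subseteq> supported d" "\<And>n. X n \<subseteq> X (Suc n)"
  shows "\<exists>N. X (Suc N) = X N"
proof (rule ccontr)
  assume "\<nexists>N. X (Suc N) = X N"
  then have less: "fn_space.dim (X n) < fn_space.dim (X (Suc n))" for n
    using dim_less_of_psubset_supported assms by (metis psubsetI)
  have "n \<le> fn_space.dim (X n)" for n
  proof (induction n)
    case (Suc n)
    then show ?case using less[of n] by simp
  qed simp
  from this[of "Suc (card {g. g permutes letters d})"]
    dim_supported_le[OF assms(2), of "Suc (card {g. g permutes letters d})"]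
  show False by simp
qed

lemma recurrence_stable:
  assumes "\<And>n. X (Suc n) = F (X n)" "X (Suc N) = X N" "N \<le> n"
  shows "X n = X N"
  using assms(3)
proof (induction n rule: dec_induct)
  case (step n)
  then show ?case using assms(1)[of n] assms(1)[of N] assms(2) by simp
qed simp

subsection \<open>Projection onto a direct summand\<close>

locale direct_sum_decomposition =
  fixes d :: nat and M U W :: "'k::field fn set"
  assumes decomposition: "is_direct_sum d M U W"
begin

lemma submodule_U: "is_submodule d U M"
  and submodule_W: "is_submodule d W M"
  and U_Int_W: "U \<inter> W = {0}"
  and M_eq: "M = {u + w |u w. u \<in> U \<and> w \<in> W}"
  using decomposition by (auto simp: is_direct_sum_def addfn_eq_plus zerofn_eq_zero)

definition proj :: "'k fn \<Rightarrow> 'k fn" where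
  "proj m = (THE u. u \<in> U \<and> m - u \<in> W)"

lemma proj_eqI:
  assumes "u \<in> U" "m - u \<in> W"
  shows "proj m = u"
  unfolding proj_def
proof (rule the_equality)
  fix u' assume u': "u' \<in> U \<and> m - u' \<in> W"
  have "u' - u = (m - u) - (m - u')" by simp
  moreover have "(m - u) - (m - u') \<in> W" using u' assms submodule_diff[OF submodule_W] by blast
  moreover have "u' - u \<in> U" using u' assms submodule_diff[OF submodule_U] by blast
  ultimately have "u' - u \<in> U \<inter> W" by simp
  then show "u' = u" using U_Int_W by simp
qed (use assms in simp)

lemma proj_in: "m \<in> M \<Longrightarrow> proj m \<in> U"
  and diff_proj_in: "m \<in> M \<Longrightarrow> m - proj m \<in> W"
  using M_eq proj_eqI by fastforce+

lemma proj_U: "u \<in> U \<Longrightarrow> proj u = u"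
  using proj_eqI submodule_zero[OF submodule_W] by simp

lemma proj_eq_zero_iff: "m \<in> M \<Longrightarrow> proj m = 0 \<longleftrightarrow> m \<in> W"
  using diff_proj_in proj_eqI submodule_zero[OF submodule_U] by fastforce

lemma is_module_hom_proj: "is_module_hom d M proj"
proof (rule is_module_homI)
  fix f h assume "f \<in> M" "h \<in> M"
  then show "proj (f + h) = proj f + proj h"
    using proj_eqI[of "proj f + proj h" "f + h"] proj_in diff_proj_in
      submodule_add[OF submodule_U] submodule_add[OF submodule_W, of "f - proj f" "h - proj h"]
    by (simp add: algebra_simps)
next
  fix c f assume "f \<in> M"
  moreover have "smultfn c f - smultfn c (proj f) = smultfn c (f - proj f)"
    by (simp add: smultfn_def fun_eq_iff algebra_simps)
  ultimately show "proj (smultfn c f) = smultfn c (proj f)"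
    using proj_eqI proj_in diff_proj_in submodule_smult[OF submodule_U]
      submodule_smult[OF submodule_W] by metis
next
  fix x f assume "x permutes letters d" "f \<in> M"
  then show "proj (act x f) = act x (proj f)"
    using proj_eqI proj_in diff_proj_in submoduleD(3)[OF submodule_U] submoduleD(3)[OF submodule_W]
    by (metis act_diff)
qed

lemma summand_of_proj_bij:
  assumes N: "is_submodule d N M" and \<alpha>: "is_module_hom d U \<alpha>" "\<alpha> ` U \<subseteq> N"
    and bij: "bij_betw (proj \<circ> \<alpha>) U U"
  shows "is_direct_sum d N (\<alpha> ` U) (N \<inter> W)" "module_iso d U (\<alpha> ` U)"
proof -
  have NM: "N \<subseteq> M" using submoduleD(1)[OF N] .
  have inj: "inj_on \<alpha> U" using bij by (auto simp: bij_betw_def dest: inj_on_imageI2)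
  show "is_direct_sum d N (\<alpha> ` U) (N \<inter> W)"
  proof (rule is_direct_sumI[OF N])
    show "is_submodule d (\<alpha> ` U) N"
      using submodule_image[OF submodule_U \<alpha>] .
    show "is_submodule d (N \<inter> W) N"
      using submodule_Int[OF N submodule_W] .
    show "m = 0" if mU: "m \<in> \<alpha> ` U" and mW: "m \<in> N \<inter> W" for m
    proof -
      obtain u where u: "u \<in> U" "m = \<alpha> u" using mU by blast
      have "proj (\<alpha> u) = 0" using proj_eq_zero_iff u mW NM by blast
      moreover have "proj (\<alpha> 0) = 0"
        using is_module_hom_zero[OF submodule_U \<alpha>(1)] proj_U[OF submodule_zero[OF submodule_U]]
        by simp
      ultimately have "(proj \<circ> \<alpha>) u = (proj \<circ> \<alpha>) 0" by simp
      then have "u = 0"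
        using bij u submodule_zero[OF submodule_U] unfolding bij_betw_def by (meson inj_onD)
      then show "m = 0" using u is_module_hom_zero[OF submodule_U \<alpha>(1)] by simp
    qed
    show "\<exists>u\<in>\<alpha> ` U. m - u \<in> N \<inter> W" if m: "m \<in> N" for m
    proof -
      have "proj m \<in> (proj \<circ> \<alpha>) ` U" using bij proj_in m NM unfolding bij_betw_def by blast
      then obtain u where u: "u \<in> U" "proj (\<alpha> u) = proj m" by auto
      have "m - \<alpha> u \<in> N" using submodule_diff[OF N m] u(1) \<alpha>(2) by blast
      moreover have "m - \<alpha> u \<in> W"
      proof -
        have "m - \<alpha> u = (m - proj m) - (\<alpha> u - proj (\<alpha> u))" using u(2) by simp
        moreover have "m - proj m \<in> W" "\<alpha> u - proj (\<alpha> u) \<in> W"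
          using diff_proj_in m u(1) \<alpha>(2) NM by auto
        ultimately show ?thesis using submodule_diff[OF submodule_W] by metis
      qed
      ultimately show ?thesis using u(1) by blast
    qed
  qed
  show "module_iso d U (\<alpha> ` U)" using module_iso_image[OF \<alpha>(1) inj] .
qed

end

subsection \<open>Fitting's lemma\<close>

lemma fitting_chains_stabilize:
  assumes Y: "is_submodule d Y X" "Y \<subseteq> supported d" and \<phi>: "is_module_hom d Y \<phi>" "\<phi> ` Y \<subseteq> Y"
  obtains N where "\<And>n. N \<le> n \<Longrightarrow> (\<phi> ^^ n) ` Y = (\<phi> ^^ N) ` Y"
    "\<And>n. N \<le> n \<Longrightarrow> {y \<in> Y. (\<phi> ^^ n) y = 0} = {y \<in> Y. (\<phi> ^^ N) y = 0}"
proof -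
  define I where "I n = (\<phi> ^^ n) ` Y" for n
  define K where "K n = {y \<in> Y. (\<phi> ^^ n) y = 0}" for n
  have I_Suc: "I (Suc n) = \<phi> ` I n" for n
    by (simp add: I_def image_comp)
  have K_Suc: "K (Suc n) = {y \<in> Y. \<phi> y \<in> K n}" for n
    using \<phi>(2) by (auto simp: K_def funpow_Suc_right simp del: funpow.simps)
  have I_sub: "is_submodule d (I n) Y" for n
    unfolding I_def
    using submodule_image[OF Y(1) is_module_hom_funpow[OF \<phi>] funpow_image_subset[OF \<phi>(2)]] .
  have K_sub: "is_submodule d (K n) Y" for n
    unfolding K_def using submodule_kernel[OF Y(1) is_module_hom_funpow[OF \<phi>]] .
  have "I (Suc n) \<subseteq> I n" for n
    using image_mono[OF \<phi>(2), of "\<phi> ^^ n"]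
    by (simp add: I_def funpow_Suc_right image_comp del: funpow.simps)
  then obtain N1 where N1: "I (Suc N1) = I N1"
    using decreasing_subspaces_stabilize[of I d] submoduleD(1,2)[OF I_sub] Y(2) by blast
  have "K n \<subseteq> K (Suc n)" for n
    using is_module_hom_zero[OF Y(1) \<phi>(1)] by (auto simp: K_def)
  then obtain N2 where N2: "K (Suc N2) = K N2"
    using increasing_subspaces_stabilize[of K d] submoduleD(1,2)[OF K_sub] Y(2) by blast
  show ?thesis
  proof (rule that[of "N1 + N2"])
    fix n assume "N1 + N2 \<le> n"
    then have "I n = I N1" "I (N1 + N2) = I N1" "K n = K N2" "K (N1 + N2) = K N2"
      using recurrence_stable[of I, OF I_Suc N1] recurrence_stable[of K, OF K_Suc N2]
      by (meson le_add1 le_add2 order.trans)+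
    then show "(\<phi> ^^ n) ` Y = (\<phi> ^^ (N1 + N2)) ` Y"
      and "{y \<in> Y. (\<phi> ^^ n) y = 0} = {y \<in> Y. (\<phi> ^^ (N1 + N2)) y = 0}"
      unfolding I_def K_def by simp_all
  qed
qed

lemma fitting_direct_sum:
  assumes Y: "is_submodule d Y X" and \<phi>: "is_module_hom d Y \<phi>" "\<phi> ` Y \<subseteq> Y"
    and image_stable: "(\<phi> ^^ (n + n)) ` Y = (\<phi> ^^ n) ` Y"
    and kernel_stable: "{y \<in> Y. (\<phi> ^^ (n + n)) y = 0} = {y \<in> Y. (\<phi> ^^ n) y = 0}"
  shows "is_direct_sum d Y ((\<phi> ^^ n) ` Y) {y \<in> Y. (\<phi> ^^ n) y = 0}"
proof -
  let ?\<psi> = "\<phi> ^^ n"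
  have \<psi>: "is_module_hom d Y ?\<psi>" "?\<psi> ` Y \<subseteq> Y"
    using is_module_hom_funpow[OF \<phi>] funpow_image_subset[OF \<phi>(2)] by blast+
  have \<psi>\<psi>: "(\<phi> ^^ (n + n)) y = ?\<psi> (?\<psi> y)" for y
    by (simp add: funpow_add)
  show ?thesis
  proof (rule is_direct_sumI[OF Y submodule_image[OF Y \<psi>] submodule_kernel[OF Y \<psi>(1)]])
    fix x assume "x \<in> ?\<psi> ` Y" "x \<in> {y \<in> Y. ?\<psi> y = 0}"
    then obtain z where z: "z \<in> Y" "x = ?\<psi> z" "?\<psi> (?\<psi> z) = 0" by auto
    then have "z \<in> {y \<in> Y. (\<phi> ^^ (n + n)) y = 0}" by (simp only: \<psi>\<psi> mem_Collect_eq)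
    then show "x = 0" using z(2) unfolding kernel_stable by simp
  next
    fix y assume y: "y \<in> Y"
    then have "?\<psi> y \<in> (\<phi> ^^ (n + n)) ` Y" unfolding image_stable by (rule imageI)
    then obtain z where z: "z \<in> Y" "?\<psi> y = ?\<psi> (?\<psi> z)" using \<psi>\<psi> by auto
    have "?\<psi> z \<in> Y" using z(1) \<psi>(2) by blast
    then have "?\<psi> (y - ?\<psi> z) = 0" using is_module_hom_diff[OF Y \<psi>(1) y] z(2) by simp
    then show "\<exists>u\<in>?\<psi> ` Y. y - u \<in> {y \<in> Y. ?\<psi> y = 0}"
      using z(1) submodule_diff[OF Y y \<open>?\<psi> z \<in> Y\<close>] by blast
  qed
qed

theorem indecomposable_endomorphism_bij:
  assumes "indecomposable d Y" and Y: "is_submodule d Y X" "Y \<subseteq> supported d"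
    and \<phi>: "is_module_hom d Y \<phi>" "\<phi> ` Y \<subseteq> Y"
    and not_nilpotent: "\<And>n. \<exists>y\<in>Y. (\<phi> ^^ n) y \<noteq> 0"
  shows "bij_betw \<phi> Y Y"
proof -
  obtain N where image_stable: "\<And>n. N \<le> n \<Longrightarrow> (\<phi> ^^ n) ` Y = (\<phi> ^^ N) ` Y"
    and kernel_stable: "\<And>n. N \<le> n \<Longrightarrow> {y \<in> Y. (\<phi> ^^ n) y = 0} = {y \<in> Y. (\<phi> ^^ N) y = 0}"
    using fitting_chains_stabilize[OF Y \<phi>] by blast
  have "is_direct_sum d Y ((\<phi> ^^ N) ` Y) {y \<in> Y. (\<phi> ^^ N) y = 0}"
    using fitting_direct_sum[OF Y(1) \<phi> image_stable[of "N + N"] kernel_stable[of "N + N"]] by simp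
  moreover have "(\<phi> ^^ N) ` Y \<noteq> {0}" using not_nilpotent[of N] by blast
  ultimately have kernel_0: "{y \<in> Y. (\<phi> ^^ N) y = 0} = {0}"
    using \<open>indecomposable d Y\<close> unfolding indecomposable_def zerofn_eq_zero by blast
  with \<open>is_direct_sum d Y _ _\<close> have image_Y: "(\<phi> ^^ N) ` Y = Y"
    unfolding is_direct_sum_def addfn_eq_plus by simp
  have "inj_on \<phi> Y"
  proof (rule inj_onI)
    fix y y' assume yy': "y \<in> Y" "y' \<in> Y" "\<phi> y = \<phi> y'"
    then have "\<phi> (y - y') = 0" using is_module_hom_diff[OF Y(1) \<phi>(1)] by simp
    then have "(\<phi> ^^ Suc N) (y - y') = 0"
      using is_module_hom_zero[OF Y(1) is_module_hom_funpow[OF \<phi>]]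
      by (simp add: funpow_Suc_right del: funpow.simps)
    then have "y - y' \<in> {y \<in> Y. (\<phi> ^^ Suc N) y = 0}" using submodule_diff[OF Y(1) yy'(1,2)] by blast
    then show "y = y'"
      unfolding kernel_stable[of "Suc N", OF le_SucI[OF order.refl]] kernel_0 by simp
  qed
  moreover have "\<phi> ` Y = Y"
  proof -
    have "Y = (\<phi> ^^ Suc N) ` Y" using image_stable[of "Suc N"] image_Y by simp
    also have "\<dots> = \<phi> ` (\<phi> ^^ N) ` Y" by (simp add: image_comp)
    finally show ?thesis using image_Y by simp
  qed
  ultimately show ?thesis by (simp add: bij_betw_def)
qed

theorem indecomposable_summand_transfer:
  assumes M: "is_direct_sum d M Y W" "M \<subseteq> supported d" and "indecomposable d Y"
    and N: "is_submodule d N M" and P: "is_module_hom d M P" "P ` M \<subseteq> N"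
    and v: "v \<in> Y" "v \<noteq> 0" "P v = v"
  shows "\<exists>U. is_summand d N U \<and> module_iso d Y U"
proof -
  interpret direct_sum_decomposition d M Y W using M(1) by unfold_locales
  have YM: "Y \<subseteq> M" using submoduleD(1)[OF submodule_U] .
  have PY: "is_module_hom d Y P" "P ` Y \<subseteq> N"
    using is_module_hom_subset[OF P(1) YM] P(2) YM by blast+
  have "P ` Y \<subseteq> M" using PY(2) submoduleD(1)[OF N] by blast
  then have \<phi>: "is_module_hom d Y (proj \<circ> P)" "(proj \<circ> P) ` Y \<subseteq> Y"
    using is_module_hom_comp[OF PY(1) is_module_hom_proj] proj_in by auto
  have "((proj \<circ> P) ^^ n) v = v" for n
    by (induction n) (simp_all add: v(3) proj_U[OF v(1)])
  then have "\<exists>y\<in>Y. ((proj \<circ> P) ^^ n) y \<noteq> 0" for n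
    using v(1,2) by metis
  then have "bij_betw (proj \<circ> P) Y Y"
    using indecomposable_endomorphism_bij[OF \<open>indecomposable d Y\<close> submodule_U _ \<phi>] M(2) YM
    by (meson order.trans)
  then show ?thesis
    using summand_of_proj_bij[OF N PY] unfolding is_summand_def by blast
qed

subsection \<open>The antisymmetrizer\<close>

lemma of_nat_fact_nonzero:
  assumes "c < CHAR('k::field)"
  shows "of_nat (fact c) \<noteq> (0::'k)"
proof -
  have "(of_nat (Suc i) :: 'k) \<noteq> 0" if "i < c" for i
  proof
    assume "(of_nat (Suc i) :: 'k) = 0"
    then have "CHAR('k) dvd Suc i" by (simp only: of_nat_eq_0_iff_char_dvd)
    then show False using dvd_imp_le[of "CHAR('k)" "Suc i"] that assms by simp
  qed
  then show ?thesis by (simp add: fact_prod_Suc of_nat_prod prod_zero_iff)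
qed

definition antisymmetrizer :: "nat \<Rightarrow> nat \<Rightarrow> 'k::field fn \<Rightarrow> 'k fn" where
  "antisymmetrizer s c f = (\<lambda>g. inverse (of_nat (fact c)) *
     (\<Sum>\<tau> | \<tau> permutes {s..<s + c}. of_int (sign \<tau>) * f (\<tau> \<circ> g)))"

text \<open>\<open>\<Sigma>\<^sub>d\<close> acts by composition on the right, the antisymmetrizer on the left.\<close>

lemma is_module_hom_antisymmetrizer: "is_module_hom d U (antisymmetrizer s c)"
  by (auto simp: is_module_hom_def antisymmetrizer_def fun_eq_iff sum.distrib smultfn_def act_def
      sum_distrib_left algebra_simps o_assoc)

subsection \<open>The shape \<open>(a, b, 1\<^sup>c)\<close>\<close>

locale two_rows_and_column =
  fixes a b c :: nat
begin

definition shape :: "nat list" where "shape = [a, b] @ replicate c 1"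
abbreviation s :: nat where "s \<equiv> a + b"
abbreviation d :: nat where "d \<equiv> a + b + c"

lemma sum_list_shape: "sum_list shape = d"
  by (simp add: shape_def sum_list_replicate)

lemma length_shape: "length shape = c + 2"
  by (simp add: shape_def)

lemma sum_list_take_shape:
  "sum_list (take m shape) = (if m = 0 then 0 else if m = 1 then a else s + min (m - 2) c)"
  by (cases m; cases "m - 1") (auto simp: shape_def sum_list_replicate)

lemma blk_shape: "j < d \<Longrightarrow> blk shape j = (if j < a then 0 else if j < s then 1 else j - s + 2)"
proof -
  assume j: "j < d"
  have "{i. i < length shape \<and> sum_list (take (Suc i) shape) \<le> j} =
      {..< (if j < a then 0 else if j < s then 1 else j - s + 2)}"
    using j by (auto simp: sum_list_take_shape length_shape split: if_splits)
  then show ?thesis by (simp add: blk_def)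
qed

lemma colx_shape: "j < d \<Longrightarrow> colx shape j = (if j < a then j else if j < s then j - a else 0)"
  by (simp add: colx_def blk_shape sum_list_take_shape)

lemma blk_shape_eq_iff:
  "x < d \<Longrightarrow> y < d \<Longrightarrow> blk shape x = blk shape y \<longleftrightarrow> (x < s \<and> y < s \<and> (x < a \<longleftrightarrow> y < a)) \<or> x = y"
  by (auto simp: blk_shape)

lemma blk_colx_shape_inj:
  "x < d \<Longrightarrow> y < d \<Longrightarrow> blk shape x = blk shape y \<Longrightarrow> colx shape x = colx shape y \<Longrightarrow> x = y"
  by (auto simp: blk_shape colx_shape split: if_splits)

lemma blk_rows: "j < d \<Longrightarrow> blk [a, b, c] j = (if j < a then 0 else if j < s then 1 else 2)"
proof -
  assume j: "j < d"
  have "{i. i < length [a, b, c] \<and> sum_list (take (Suc i) [a, b, c]) \<le> j} =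
      {..< (if j < a then 0 else if j < s then 1 else 2)}"
    using j by (auto simp: less_Suc_eq numeral_2_eq_2)
  then show ?thesis by (simp add: blk_def)
qed

lemma signed_perm_module_eq:
  "signed_perm_module [a, b] [c] = ind_module d (young_subgroup d [a, b, c]) (sign_part s)"
  by (simp add: signed_perm_module_def add.assoc)

lemma perm_module_shape_eq: "perm_module shape = ind_module d (young_subgroup d shape) (\<lambda>h. 1)"
  by (simp add: perm_module_def sum_list_shape)

lemma young_subgroup_rows_iff:
  "h \<in> young_subgroup d [a, b, c] \<longleftrightarrow>
     h permutes letters d \<and> (\<forall>j<d. (h j < a \<longleftrightarrow> j < a) \<and> (h j < s \<longleftrightarrow> j < s))"
proof -
  have "blk [a, b, c] (h j) = blk [a, b, c] j \<longleftrightarrow> (h j < a \<longleftrightarrow> j < a) \<and> (h j < s \<longleftrightarrow> j < s)"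
    if "h permutes letters d" "j < d" for j
    using permutes_in_image[OF that(1), of j] that(2)
    by (auto simp: letters_def blk_rows)
  then show ?thesis by (auto simp: young_subgroup_def letters_def)
qed

lemma young_subgroup_shape_iff:
  "h \<in> young_subgroup d shape \<longleftrightarrow> h permutes {0..<s} \<and> (\<forall>j<s. h j < a \<longleftrightarrow> j < a)"
proof
  assume h: "h \<in> young_subgroup d shape"
  then have hp: "h permutes letters d" and hblk: "\<And>j. j < d \<Longrightarrow> blk shape (h j) = blk shape j"
    by (auto simp: young_subgroup_def sum_list_shape letters_def)
  have hd: "j < d \<Longrightarrow> h j < d" for j using permutes_in_image[OF hp, of j] by (simp add: letters_def)
  have "h j = j" if "j \<notin> {0..<s}" for j
  proof (cases "j < d")
    case True
    then show ?thesis using hblk[OF True] blk_shape_eq_iff[OF hd[OF True] True] that by auto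
  qed (use permutes_not_in[OF hp] in \<open>auto simp: letters_def\<close>)
  then have hs: "h permutes {0..<s}"
    using permutes_superset[OF hp] by blast
  moreover have "h j < a \<longleftrightarrow> j < a" if "j < s" for j
    using hblk[of j] blk_shape_eq_iff[of "h j" j] permutes_in_image[OF hs, of j] that by auto
  ultimately show "h permutes {0..<s} \<and> (\<forall>j<s. h j < a \<longleftrightarrow> j < a)" by blast
next
  assume h: "h permutes {0..<s} \<and> (\<forall>j<s. h j < a \<longleftrightarrow> j < a)"
  then have hp: "h permutes letters d" by (auto simp: letters_def intro: permutes_subset)
  have "blk shape (h j) = blk shape j" if "j < d" for j
    using h permutes_in_image[of h "{0..<s}" j] permutes_not_in[of h "{0..<s}" j] that
    by (cases "j < s") (auto simp: blk_shape_eq_iff)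
  then show "h \<in> young_subgroup d shape"
    using hp by (simp add: young_subgroup_def sum_list_shape letters_def)
qed

lemma young_subgroup_shape_subset: "young_subgroup d shape \<subseteq> young_subgroup d [a, b, c]"
proof
  fix h assume "h \<in> young_subgroup d shape"
  then have hs: "h permutes {0..<s}" and "\<forall>j<s. h j < a \<longleftrightarrow> j < a"
    by (auto simp: young_subgroup_shape_iff)
  moreover have "h j < s \<longleftrightarrow> j < s" for j
    using permutes_in_image[OF hs, of j] permutes_not_in[OF hs, of j] by (cases "j < s") auto
  ultimately have "(h j < a \<longleftrightarrow> j < a) \<and> (h j < s \<longleftrightarrow> j < s)" for j
    using permutes_not_in[OF hs, of j] by (cases "j < s") simp_all
  moreover have "h permutes letters d"
    using permutes_subset[OF hs] by (simp add: letters_def)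
  ultimately show "h \<in> young_subgroup d [a, b, c]"
    unfolding young_subgroup_rows_iff by blast
qed

lemma sign_part_young_subgroup_shape: "h \<in> young_subgroup d shape \<Longrightarrow> sign_part s h = 1"
proof -
  assume "h \<in> young_subgroup d shape"
  then have "(\<lambda>j. if s \<le> j then h j else j) = id"
    using permutes_not_in[of h "{0..<s}"] by (auto simp: young_subgroup_shape_iff)
  then show ?thesis by (simp add: sign_part_def)
qed

lemma signed_perm_module_submodule:
  "is_submodule d (signed_perm_module [a, b] [c] :: 'k::field fn set) (perm_module shape)"
proof (rule submodule_mono)
  show "is_submodule d (signed_perm_module [a, b] [c] :: 'k fn set) UNIV"
    unfolding signed_perm_module_eq by (rule ind_module_submodule)
  show "signed_perm_module [a, b] [c] \<subseteq> (perm_module shape :: 'k fn set)"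
    using young_subgroup_shape_subset sign_part_young_subgroup_shape
    by (fastforce simp: signed_perm_module_eq perm_module_shape_eq ind_module_def)
qed

lemma permutes_tail_apply:
  assumes "\<tau> permutes {s..<d}" "j < d"
  shows "\<tau> j < d" "\<tau> j < s \<longleftrightarrow> j < s" "j < s \<Longrightarrow> \<tau> j = j"
  using permutes_in_image[OF assms(1), of j] permutes_not_in[OF assms(1), of j] assms(2)
  by (cases "j < s"; auto)+

lemma young_subgroup_rows_split:
  assumes h: "h \<in> young_subgroup d [a, b, c]"
  shows "(\<lambda>j. if j < s then h j else j) \<in> young_subgroup d shape"
    and "(\<lambda>j. if s \<le> j then h j else j) permutes {s..<d}"
    and "\<tau> permutes {s..<d} \<Longrightarrow>
      \<tau> \<circ> h = (\<lambda>j. if j < s then h j else j) \<circ> (\<tau> \<circ> (\<lambda>j. if s \<le> j then h j else j))"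
proof -
  have hp: "h permutes letters d" and rows: "\<And>j. j < d \<Longrightarrow> (h j < a \<longleftrightarrow> j < a) \<and> (h j < s \<longleftrightarrow> j < s)"
    using h by (auto simp: young_subgroup_rows_iff)
  have hd: "j < d \<Longrightarrow> h j < d" and hfix: "d \<le> j \<Longrightarrow> h j = j" for j
    using permutes_in_image[OF hp, of j] permutes_not_in[OF hp, of j] by (auto simp: letters_def)
  have "(\<lambda>j. if j \<in> {0..<s} then h j else j) permutes {0..<s}"
    using rows by (intro permutes_restrict_invariant[OF hp]) auto
  then show "(\<lambda>j. if j < s then h j else j) \<in> young_subgroup d shape"
    using rows by (simp add: young_subgroup_shape_iff)
  have "h j \<in> {s..<d}" if "j \<in> {s..<d}" for j
    using rows[of j] hd[of j] that by auto
  then have "(\<lambda>j. if j \<in> {s..<d} then h j else j) permutes {s..<d}"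
    by (intro permutes_restrict_invariant[OF hp]) auto
  moreover have "(\<lambda>j. if j \<in> {s..<d} then h j else j) = (\<lambda>j. if s \<le> j then h j else j)"
    using hfix by (auto simp: fun_eq_iff)
  ultimately show "(\<lambda>j. if s \<le> j then h j else j) permutes {s..<d}" by simp
  show "\<tau> \<circ> h = (\<lambda>j. if j < s then h j else j) \<circ> (\<tau> \<circ> (\<lambda>j. if s \<le> j then h j else j))"
    if \<tau>: "\<tau> permutes {s..<d}"
  proof
    fix j
    show "(\<tau> \<circ> h) j = ((\<lambda>j. if j < s then h j else j) \<circ> (\<tau> \<circ> (\<lambda>j. if s \<le> j then h j else j))) j"
    proof (cases "j < d")
      case True
      then show ?thesis
        using rows[OF True] permutes_tail_apply[OF \<tau>] hd[OF True] by (cases "j < s") auto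
    next
      case False
      then show ?thesis using hfix permutes_not_in[OF \<tau>, of j] by simp
    qed
  qed
qed

lemma antisymmetrizer_mem_signed_perm_module:
  assumes f: "f \<in> (perm_module shape :: 'k::field fn set)"
  shows "antisymmetrizer s c f \<in> signed_perm_module [a, b] [c]"
proof -
  have f_0: "\<And>g. \<not> g permutes letters d \<Longrightarrow> f g = 0"
    and f_inv: "\<And>h g. h \<in> young_subgroup d shape \<Longrightarrow> g permutes letters d \<Longrightarrow> f (h \<circ> g) = f g"
    using f by (auto simp: perm_module_shape_eq ind_module_def)
  have \<tau>_letters: "\<tau> permutes letters d" if "\<tau> permutes {s..<d}" for \<tau>
    using permutes_subset[OF that] by (auto simp: letters_def)
  show ?thesis unfolding signed_perm_module_eq ind_module_def
  proof (intro CollectI conjI allI impI ballI)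
    fix g :: "nat \<Rightarrow> nat" assume "\<not> g permutes letters d"
    then show "antisymmetrizer s c f g = 0"
      using f_0 permutes_compose_left_iff[OF \<tau>_letters] by (simp add: antisymmetrizer_def)
  next
    fix h g assume h: "h \<in> young_subgroup d [a, b, c]" and g: "g permutes letters d"
    let ?h_head = "\<lambda>j. if j < s then h j else j"
    let ?h_tail = "\<lambda>j. if s \<le> j then h j else j"
    note split = young_subgroup_rows_split[OF h]
    have "f (\<tau> \<circ> (h \<circ> g)) = f (\<tau> \<circ> ?h_tail \<circ> g)" if \<tau>: "\<tau> permutes {s..<d}" for \<tau>
    proof -
      have "\<tau> \<circ> (h \<circ> g) = ?h_head \<circ> (\<tau> \<circ> ?h_tail \<circ> g)"
        by (simp only: o_assoc split(3)[OF \<tau>])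
      moreover have "\<tau> \<circ> ?h_tail \<circ> g permutes letters d"
        using permutes_compose[OF g] permutes_compose[OF \<tau>_letters[OF split(2)] \<tau>_letters[OF \<tau>]]
        by blast
      ultimately show ?thesis using f_inv[OF split(1)] by simp
    qed
    then have "(\<Sum>\<tau> | \<tau> permutes {s..<d}. of_int (sign \<tau>) * f (\<tau> \<circ> (h \<circ> g))) =
        (\<Sum>\<tau> | \<tau> permutes {s..<d}. of_int (sign \<tau>) * f (\<tau> \<circ> ?h_tail \<circ> g))"
      by simp
    also have "\<dots> = of_int (sign ?h_tail) * (\<Sum>\<tau> | \<tau> permutes {s..<d}. of_int (sign \<tau>) * f (\<tau> \<circ> g))"
      using sum_sign_compose_right[OF split(2), of "\<lambda>\<tau>. f (\<tau> \<circ> g)"] by (simp add: comp_assoc)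
    finally show "antisymmetrizer s c f (h \<circ> g) = sign_part s h * antisymmetrizer s c f g"
      by (simp add: antisymmetrizer_def sign_part_def mult_ac)
  qed
qed

lemma mem_column_stabilizer_shape:
  "\<sigma> \<in> column_stabilizer shape id \<longleftrightarrow> \<sigma> permutes letters d \<and> (\<forall>j<d. colx shape (\<sigma> j) = colx shape j)"
  by (auto simp: column_stabilizer_def sum_list_shape letters_def)

lemma column_stabilizer_compose_tail:
  assumes \<sigma>: "\<sigma> \<in> column_stabilizer shape id" and \<tau>: "\<tau> permutes {s..<d}"
  shows "\<sigma> \<circ> \<tau> \<in> column_stabilizer shape id"
proof -
  have "colx shape (\<tau> j) = colx shape j" if "j < d" for j
    using permutes_tail_apply[OF \<tau> that] that by (cases "j < s") (simp_all add: colx_shape)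
  moreover have "\<tau> permutes letters d" using permutes_subset[OF \<tau>] by (simp add: letters_def)
  ultimately show ?thesis
    using \<sigma> permutes_compose permutes_tail_apply(1)[OF \<tau>]
    by (auto simp: mem_column_stabilizer_shape)
qed

lemma bij_betw_column_stabilizer_compose_tail:
  assumes \<tau>: "\<tau> permutes {s..<d}"
  shows "bij_betw (\<lambda>\<sigma>. \<sigma> \<circ> \<tau>) (column_stabilizer shape id) (column_stabilizer shape id)"
proof (rule bij_betw_byWitness[where f' = "\<lambda>\<sigma>. \<sigma> \<circ> inv \<tau>"])
  show "(\<lambda>\<sigma>. \<sigma> \<circ> \<tau>) ` column_stabilizer shape id \<subseteq> column_stabilizer shape id"
    "(\<lambda>\<sigma>. \<sigma> \<circ> inv \<tau>) ` column_stabilizer shape id \<subseteq> column_stabilizer shape id"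
    using column_stabilizer_compose_tail \<tau> permutes_inv[OF \<tau>] by blast+
qed (simp_all add: comp_assoc permutes_inv_o[OF \<tau>])

lemma blk_shape_compose_tail:
  assumes \<tau>: "\<tau> permutes {s..<d}" and "x < d" "y < d"
  shows "blk shape (\<tau> x) = blk shape (\<tau> y) \<longleftrightarrow> blk shape x = blk shape y"
proof -
  have "\<tau> x = \<tau> y \<longleftrightarrow> x = y" using permutes_inj[OF \<tau>] by (simp add: inj_eq)
  then show ?thesis
    unfolding blk_shape_eq_iff[OF assms(2,3)]
      blk_shape_eq_iff[OF permutes_tail_apply(1)[OF \<tau> assms(2)] permutes_tail_apply(1)[OF \<tau> assms(3)]]
    using permutes_tail_apply[OF \<tau> assms(2)] permutes_tail_apply[OF \<tau> assms(3)]
    by (cases "x < s"; cases "y < s") auto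
qed

lemma tabloid_vec_compose_tail:
  assumes \<sigma>: "\<sigma> permutes letters d" and \<tau>: "\<tau> permutes {s..<d}"
  shows "tabloid_vec shape (inv \<sigma>) (\<tau> \<circ> g) = (tabloid_vec shape (inv (\<sigma> \<circ> \<tau>)) g :: 'k::field)"
proof -
  have \<tau>_letters: "\<tau> permutes letters d" using permutes_subset[OF \<tau>] by (simp add: letters_def)
  have inv_comp: "inv (\<sigma> \<circ> \<tau>) = inv \<tau> \<circ> inv \<sigma>"
    using o_inv_distrib[OF permutes_bij[OF \<sigma>] permutes_bij[OF \<tau>_letters]] .
  have lt: "p permutes letters d \<Longrightarrow> j < d \<Longrightarrow> p j < d" for p j
    using permutes_in_image[of p "letters d" j] by (simp add: letters_def)
  have "blk shape (\<tau> (g j)) = blk shape (inv \<sigma> j) \<longleftrightarrow> blk shape (g j) = blk shape (inv \<tau> (inv \<sigma> j))"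
    if g: "g permutes letters d" and j: "j < d" for j
    using blk_shape_compose_tail[OF \<tau> lt[OF g j]
        lt[OF permutes_inv[OF \<tau>_letters] lt[OF permutes_inv[OF \<sigma>] j]]]
    by (simp add: permutes_inverses(1)[OF \<tau>])
  then show ?thesis
    using permutes_compose_left_iff[OF \<tau>_letters, of g]
    by (auto simp: tabloid_vec_def sum_list_shape letters_def inv_comp)
qed

lemma polytabloid_shape_apply:
  "polytabloid shape id g =
     (\<Sum>\<sigma>\<in>column_stabilizer shape id. of_int (sign \<sigma>) * (tabloid_vec shape (inv \<sigma>) g :: 'k::field))"
  by (simp add: polytabloid_def)

text \<open>The last \<open>c\<close> letters lie in a single column of the standard tableau.\<close>

lemma polytabloid_compose_tail:
  assumes \<tau>: "\<tau> permutes {s..<d}"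
  shows "(polytabloid shape id (\<tau> \<circ> g) :: 'k::field) = of_int (sign \<tau>) * polytabloid shape id g"
proof -
  let ?C = "column_stabilizer shape id"
  define T where "T \<sigma> = (of_int (sign \<sigma>) :: 'k) * tabloid_vec shape (inv \<sigma>) g" for \<sigma>
  have perm: "permutation p" if "p permutes letters d" for p
    using permutes_imp_permutation[OF _ that] by (simp add: letters_def)
  have \<tau>_letters: "\<tau> permutes letters d" using permutes_subset[OF \<tau>] by (simp add: letters_def)
  have "of_int (sign \<sigma>) * tabloid_vec shape (inv \<sigma>) (\<tau> \<circ> g) = of_int (sign \<tau>) * T (\<sigma> \<circ> \<tau>)"
    if "\<sigma> \<in> ?C" for \<sigma>
  proof -
    have \<sigma>: "\<sigma> permutes letters d" using that by (simp add: mem_column_stabilizer_shape)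
    have "sign \<sigma> = sign \<tau> * sign (\<sigma> \<circ> \<tau>)"
      using sign_compose[OF perm[OF \<sigma>] perm[OF \<tau>_letters]] by simp
    then show ?thesis
      by (simp add: T_def tabloid_vec_compose_tail[OF \<sigma> \<tau>])
  qed
  then have "polytabloid shape id (\<tau> \<circ> g) = (\<Sum>\<sigma>\<in>?C. of_int (sign \<tau>) * T (\<sigma> \<circ> \<tau>))"
    unfolding polytabloid_shape_apply by (rule sum.cong[OF refl])
  also have "\<dots> = of_int (sign \<tau>) * (\<Sum>\<sigma>\<in>?C. T (\<sigma> \<circ> \<tau>))"
    by (rule sum_distrib_left[symmetric])
  also have "(\<Sum>\<sigma>\<in>?C. T (\<sigma> \<circ> \<tau>)) = (\<Sum>\<sigma>\<in>?C. T \<sigma>)"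
    using sum.reindex_bij_betw[OF bij_betw_column_stabilizer_compose_tail[OF \<tau>], of T] .
  finally show ?thesis unfolding T_def polytabloid_shape_apply .
qed

lemma antisymmetrizer_polytabloid:
  assumes "of_nat (fact c) \<noteq> (0::'k::field)"
  shows "antisymmetrizer s c (polytabloid shape id :: 'k fn) = polytabloid shape id"
proof
  fix g
  have "of_int (sign \<tau>) * polytabloid shape id (\<tau> \<circ> g) = (polytabloid shape id g :: 'k)"
    if "\<tau> permutes {s..<d}" for \<tau>
  proof -
    have "(of_int (sign \<tau>) :: 'k) * of_int (sign \<tau>) = 1" by (simp flip: of_int_mult)
    then show ?thesis by (simp only: polytabloid_compose_tail[OF that] mult.assoc[symmetric]) simp
  qed
  then have "(\<Sum>\<tau> | \<tau> permutes {s..<d}. of_int (sign \<tau>) * polytabloid shape id (\<tau> \<circ> g))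
      = (\<Sum>\<tau> | \<tau> permutes {s..<d}. polytabloid shape id g :: 'k)"
    by (intro sum.cong) simp_all
  also have "\<dots> = of_nat (fact c) * polytabloid shape id g"
    using card_permutations[of "{s..<d}" c] by simp
  finally have "antisymmetrizer s c (polytabloid shape id) g
      = inverse (of_nat (fact c)) * (of_nat (fact c) * (polytabloid shape id g :: 'k))"
    unfolding antisymmetrizer_def by simp
  then show "antisymmetrizer s c (polytabloid shape id) g = (polytabloid shape id g :: 'k)"
    using assms by (simp add: mult.assoc[symmetric])
qed

lemma polytabloid_shape_id: "(polytabloid shape id id :: 'k::field) = 1"
proof -
  have tab: "tabloid_vec shape (inv \<sigma>) id = (if \<sigma> = id then 1 else (0::'k))"
    if "\<sigma> \<in> column_stabilizer shape id" for \<sigma>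
  proof -
    have \<sigma>: "\<sigma> permutes letters d" and col: "\<And>j. j < d \<Longrightarrow> colx shape (\<sigma> j) = colx shape j"
      using that by (auto simp: mem_column_stabilizer_shape)
    have lt: "j < d \<Longrightarrow> \<sigma> j < d" for j
      using permutes_in_image[OF \<sigma>, of j] by (simp add: letters_def)
    have "\<sigma> = id" if blk: "\<forall>j<d. blk shape j = blk shape (inv \<sigma> j)"
    proof -
      have "\<sigma> j = j" if "j < d" for j
        using blk_colx_shape_inj[OF lt[OF that] that] blk[rule_format, OF lt[OF that]] col[OF that]
        by (simp add: permutes_inverses(2)[OF \<sigma>])
      moreover have "\<sigma> j = j" if "\<not> j < d" for j
        using permutes_not_in[OF \<sigma>] that by (simp add: letters_def)
      ultimately show ?thesis by (auto simp: fun_eq_iff)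
    qed
    then show ?thesis by (auto simp: tabloid_vec_def sum_list_shape letters_def)
  qed
  have "(polytabloid shape id id :: 'k) = (\<Sum>\<sigma>\<in>column_stabilizer shape id. if \<sigma> = id then 1 else 0)"
    unfolding polytabloid_shape_apply by (rule sum.cong) (simp_all add: tab)
  moreover have "id \<in> column_stabilizer shape id" by (simp add: mem_column_stabilizer_shape)
  moreover have "finite (column_stabilizer shape id)"
    by (rule finite_subset[OF _ finite_permutations_letters])
      (auto simp: mem_column_stabilizer_shape)
  ultimately show ?thesis by simp
qed

lemma polytabloid_shape_nonzero: "(polytabloid shape id :: 'k::field fn) \<noteq> 0"
proof
  assume "(polytabloid shape id :: 'k fn) = 0"
  then have "(polytabloid shape id id :: 'k) = 0" by simp
  then show False using polytabloid_shape_id[where 'k='k] by simp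
qed

lemma polytabloid_shape_mem_specht: "(polytabloid shape id :: 'k::field fn) \<in> specht_module shape"
  unfolding specht_module_def kspan_def
  by (rule CollectI, rule exI[of _ "{polytabloid shape id}"], rule exI[of _ "\<lambda>_. 1"]) auto

end

theorem proposition3p5p1:
  fixes a b c :: nat
  assumes "CHAR('k::field) > 0"
    and "1 \<le> c" and "c < CHAR('k)"
    and "a \<ge> b" and "b \<ge> 1"
  shows "\<forall>Y :: 'k fn set. is_young_module ([a, b] @ replicate c 1) Y \<longrightarrow>
           (\<exists>U. is_summand (a + b + c) (signed_perm_module [a, b] [c]) U \<and>
                module_iso (a + b + c) Y U)"
proof (intro allI impI)
  fix Y :: "'k fn set"
  interpret two_rows_and_column a b c .
  assume "is_young_module ([a, b] @ replicate c 1) Y"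
  then have "is_young_module shape Y" by (simp only: shape_def)
  then obtain W where "is_direct_sum d (perm_module shape) Y W" "indecomposable d Y"
    and "specht_module shape \<subseteq> Y"
    unfolding is_young_module_def is_summand_def sum_list_shape by blast
  then show "\<exists>U. is_summand d (signed_perm_module [a, b] [c]) U \<and> module_iso d Y U"
  proof (intro indecomposable_summand_transfer[where P = "antisymmetrizer s c"
        and v = "polytabloid shape id"])
    show "perm_module shape \<subseteq> (supported d :: 'k fn set)"
      using ind_module_subset_supported by (simp add: perm_module_shape_eq)
    show "antisymmetrizer s c ` perm_module shape \<subseteq> (signed_perm_module [a, b] [c] :: 'k fn set)"
      using antisymmetrizer_mem_signed_perm_module by blast
    show "antisymmetrizer s c (polytabloid shape id) = (polytabloid shape id :: 'k fn)"
      using antisymmetrizer_polytabloid[OF of_nat_fact_nonzero[OF assms(3)]] .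
  qed (use signed_perm_module_submodule is_module_hom_antisymmetrizer polytabloid_shape_nonzero
      polytabloid_shape_mem_specht in auto)
qed

end
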